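(* Let $\alpha>0$ and let $D^{(\alpha)}_{\mathsf{in},n}=\sum_{(\xi,r)\in X^{(n)}}|\xi|^\alpha 1_{B^{\mathbb{T}_n}_{r}(o)}(\xi)$, where $|\xi|={\rm d}_{\mathbb{T}_n}(\xi,o)$. Then: (i) if $s>\alpha+d$, then $\lim_{n\to\infty}\mathbb{E}D^{(\alpha)}_{\mathsf{in},n}=d\kappa_d(\alpha+d)^{-1}\mathbb{E}R^{\alpha+d}$; (ii) if $s=\alpha+d$, then $\lim_{n\to\infty}(\log n)^{-1}\mathbb{E}D^{(\alpha)}_{\mathsf{in},n}=d\kappa_d\beta$; (iii) if $s<\alpha+d$, then $\lim_{n\to\infty}n^{s-\alpha-d}\mathbb{E}D^{(\alpha)}_{\mathsf{in},n}=\beta\int_{[-1/2,1/2]^d}|\eta|^{\alpha-s}\,{\rm d}\eta$. Here $\kappa_d$ is the volume of the unit ball in $\mathbb{R}^d$.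
   Context: Fix an integer $d\ge2$. For $n\ge1$, $\mathbb{T}_n$ is the torus obtained from $[-n/2,n/2]^d$ by identifying opposite faces, with toroidal distance ${\rm d}_{\mathbb{T}_n}$ and $B^{\mathbb{T}_n}_r(\xi)=\{\eta\in\mathbb{T}_n:{\rm d}_{\mathbb{T}_n}(\xi,\eta)\le r\}$. $R$ is a nonnegative random variable with absolutely continuous distribution such that $\lim_{h\to\infty}h^s\mathbb{P}(R>h)=\beta$ for some $\beta,s\in(0,\infty)$. $X^{(n)}$ is a homogeneous Poisson point process of intensity $1$ on $\mathbb{T}_n$, each point independently marked with a mark in $[0,\infty)$ distributed as $R$ (points written $(\xi,r)$). *)

theory Defs
  imports "HOL-Probability.Probability"
begin

text \<open>Torus T_n: represented by the fundamental domain [-n/2,n/2)^d in real^'d.\<close>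

definition torus_box :: "nat \<Rightarrow> (real^'d) set" where
  "torus_box n = {x. \<forall>i. - real n / 2 \<le> x $ i \<and> x $ i < real n / 2}"

definition torus_dist :: "nat \<Rightarrow> real^'d \<Rightarrow> real^'d \<Rightarrow> real" where
  "torus_dist n x y = (INF k \<in> {k::real^'d. \<forall>i. k $ i \<in> \<int>}. norm (x - y - real n *\<^sub>R k))"

definition torus_leb :: "nat \<Rightarrow> (real^'d) measure" where
  "torus_leb n = density lborel (indicator (torus_box n))"

definition poisson_process :: "'w measure \<Rightarrow> ('w \<Rightarrow> 'a set) \<Rightarrow> 'a measure \<Rightarrow> bool" where
  "poisson_process M X mu \<longleftrightarrow>
     prob_space M \<and> finite_measure mu \<and>
     (\<forall>\<omega>\<in>space M. finite (X \<omega>) \<and> X \<omega> \<subseteq> space mu) \<and>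
     (\<forall>B\<in>sets mu. (\<lambda>\<omega>. card (X \<omega> \<inter> B)) \<in> measurable M (count_space UNIV)) \<and>
     (\<forall>B\<in>sets mu. \<forall>k::nat.
        measure M {\<omega>\<in>space M. card (X \<omega> \<inter> B) = k}
          = measure mu B ^ k / fact k * exp (- measure mu B)) \<and>
     (\<forall>(Bs :: nat \<Rightarrow> 'a set) m. (\<forall>i<m. Bs i \<in> sets mu) \<longrightarrow> disjoint_family_on Bs {..<m} \<longrightarrow>
        prob_space.indep_vars M (\<lambda>_. count_space UNIV) (\<lambda>i \<omega>. card (X \<omega> \<inter> Bs i)) {..<m})"

definition D_in :: "real \<Rightarrow> nat \<Rightarrow> ((real^'d) \<times> real) set \<Rightarrow> real" where
  "D_in \<alpha> n P = (\<Sum>(\<xi>, r)\<in>P. torus_dist n \<xi> 0 powr \<alpha> * indicator {\<eta>. torus_dist n \<eta> 0 \<le> r} \<xi>)"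

end

theory Submission
  imports Defs "HOL-Real_Asymp.Real_Asymp"
begin

(* By Campbell's formula, and because the toroidal distance is the Euclidean norm on the
   fundamental domain [-n/2,n/2)^d, the expectation equals the integral of
   |x|^alpha * P(R >= |x|) over that box.  Since t^s * P(R >= t) is bounded and tends to beta:
   - if s > alpha + d, the integrand is integrable on R^d, and monotone convergence together with
     Fubini gives d * kappa_d * E R^(alpha+d) / (alpha+d);
   - if s < alpha + d, the substitution x = n y turns n^(s-alpha-d) times the integral into the
     integral over the unit box of |y|^(alpha-s) * (n|y|)^s * P(R >= n|y|), which converges
     by dominated convergence;
   - if s = alpha + d, polar coordinates reduce the integral over a ball of radius r to
     d * kappa_d times the integral of t^(s-1) * P(R >= t) over [0,r], which grows like
     beta * ln r, and the box of side n lies between the balls of radii n/4 and d*n. *)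

section \<open>Toroidal distance\<close>

lemma torus_dist_le_norm_diff:
  assumes "\<forall>i. k $ i \<in> \<int>"
  shows "torus_dist n x y \<le> norm (x - y - real n *\<^sub>R k)"
  unfolding torus_dist_def using assms
  by (intro cINF_lower bdd_belowI[of _ 0]) auto

lemma torus_dist_0_triangle: "torus_dist n x 0 \<le> torus_dist n y 0 + dist x y"
proof -
  have "torus_dist n x 0 - dist x y \<le> torus_dist n y 0"
    unfolding torus_dist_def[of n y]
  proof (rule cINF_greatest)
    show "{k::real^'a. \<forall>i. k $ i \<in> \<int>} \<noteq> {}" by (auto intro!: exI[of _ 0])
  next
    fix k :: "real^'a" assume k: "k \<in> {k. \<forall>i. k $ i \<in> \<int>}"
    have "torus_dist n x 0 \<le> norm (x - 0 - real n *\<^sub>R k)"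
      using k by (intro torus_dist_le_norm_diff) auto
    also have "\<dots> \<le> norm (y - 0 - real n *\<^sub>R k) + dist x y"
      using norm_triangle_ineq[of "x - y" "y - real n *\<^sub>R k"]
      by (simp add: dist_norm algebra_simps)
    finally show "torus_dist n x 0 - dist x y \<le> norm (y - 0 - real n *\<^sub>R k)" by simp
  qed
  then show ?thesis by simp
qed

lemma lipschitz_on_torus_dist_0: "1-lipschitz_on UNIV (\<lambda>x::real^'d. torus_dist n x 0)"
proof (rule lipschitz_onI)
  fix x y :: "real^'d"
  show "dist (torus_dist n x 0) (torus_dist n y 0) \<le> 1 * dist x y"
    using torus_dist_0_triangle[of n x y] torus_dist_0_triangle[of n y x]
    by (simp add: dist_real_def dist_commute abs_le_iff)
qed simp

lemma borel_measurable_torus_dist_0[measurable]: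
  "(\<lambda>x. torus_dist n x 0) \<in> borel_measurable borel"
  by (rule borel_measurable_continuous_onI lipschitz_on_continuous_on[OF lipschitz_on_torus_dist_0])+

lemma abs_le_abs_diff_int_multiple:
  fixes a k :: real
  assumes "k \<in> \<int>" "- real n / 2 \<le> a" "a < real n / 2"
  shows "\<bar>a\<bar> \<le> \<bar>a - real n * k\<bar>"
proof -
  obtain m where m: "k = of_int m" using assms(1) Ints_cases by blast
  consider "m = 0" | "m \<ge> 1" | "m \<le> -1" by linarith
  then show ?thesis
  proof cases
    case 2
    then have "real n * 1 \<le> real n * k" using m by (intro mult_left_mono) auto
    then show ?thesis using assms by linarith
  next
    case 3
    then have "real n * k \<le> real n * (-1)" using m by (intro mult_left_mono) auto
    then show ?thesis using assms by linarith
  qed (use m in simp)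
qed

lemma torus_dist_0_eq_norm:
  assumes x: "x \<in> torus_box n"
  shows "torus_dist n x 0 = norm x"
proof (rule antisym)
  show "torus_dist n x 0 \<le> norm x"
    using torus_dist_le_norm_diff[of 0 n x 0] by simp
  have "norm x \<le> norm (x - 0 - real n *\<^sub>R k)" if "\<forall>i. k $ i \<in> \<int>" for k :: "real^'a"
    unfolding norm_vec_def
    by (rule L2_set_mono) (use x that abs_le_abs_diff_int_multiple in \<open>auto simp: torus_box_def\<close>)
  then show "norm x \<le> torus_dist n x 0"
    unfolding torus_dist_def by (intro cINF_greatest) (auto intro!: exI[of _ 0])
qed

lemma sets_torus_box[measurable]: "torus_box n \<in> sets borel"
  unfolding torus_box_def by measurable

section \<open>Campbell's formula\<close>

lemma sums_poisson_mean: "(\<lambda>k. real k * (l ^ k / fact k * exp (- l))) sums (l::real)"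
proof -
  have "(\<lambda>j. l * (l ^ j /\<^sub>R fact j) * exp (- l)) sums (l * exp l * exp (- l))"
    by (intro sums_mult sums_mult2 exp_converges)
  then have "(\<lambda>j. real (Suc j) * (l ^ Suc j / fact (Suc j) * exp (- l))) sums l"
    by (simp add: exp_minus field_simps del: of_nat_Suc)
  then show ?thesis by (subst (asm) sums_Suc_iff) simp
qed

lemma poisson_process_nn_integral_card:
  assumes PP: "poisson_process M X mu" and B: "B \<in> sets mu"
  shows "(\<integral>\<^sup>+\<omega>. of_nat (card (X \<omega> \<inter> B)) \<partial>M) = emeasure mu B"
proof -
  define N where "N \<omega> = card (X \<omega> \<inter> B)" for \<omega>
  define l where "l = measure mu B"
  interpret P: prob_space M using PP by (simp add: poisson_process_def)
  interpret F: finite_measure mu using PP by (simp add: poisson_process_def)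
  have "N \<in> measurable M (count_space UNIV)"
    using PP B unfolding poisson_process_def N_def[abs_def] by blast
  then have [measurable]: "{\<omega>\<in>space M. N \<omega> = k} \<in> sets M" for k
    by (simp add: measurable_count_space_eq2_countable vimage_def Int_def conj_commute)
  have prob: "measure M {\<omega>\<in>space M. N \<omega> = k} = l ^ k / fact k * exp (- l)" for k
    using PP B by (simp add: poisson_process_def N_def l_def)
  have N_eq: "(of_nat (N \<omega>) :: ennreal) = (\<Sum>k. of_nat k * indicator {\<omega>\<in>space M. N \<omega> = k} \<omega>)"
    if "\<omega> \<in> space M" for \<omega>
  proof -
    have "(\<lambda>k. of_nat k * indicator {\<omega>\<in>space M. N \<omega> = k} \<omega>) = (\<lambda>k. if k = N \<omega> then of_nat k else (0::ennreal))"
      using that by (auto simp: indicator_def)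
    then show ?thesis by (simp add: sums_single[THEN sums_unique])
  qed
  have "(\<integral>\<^sup>+\<omega>. of_nat (N \<omega>) \<partial>M) = (\<integral>\<^sup>+\<omega>. (\<Sum>k. of_nat k * indicator {\<omega>\<in>space M. N \<omega> = k} \<omega>) \<partial>M)"
    by (rule nn_integral_cong) (simp add: N_eq)
  also have "\<dots> = (\<Sum>k. \<integral>\<^sup>+\<omega>. of_nat k * indicator {\<omega>\<in>space M. N \<omega> = k} \<omega> \<partial>M)"
    by (rule nn_integral_suminf) auto
  also have "\<dots> = (\<Sum>k. ennreal (real k * (l ^ k / fact k * exp (- l))))"
    by (intro suminf_cong)
      (simp add: nn_integral_cmult P.emeasure_eq_measure prob ennreal_of_nat_eq_real_of_nat l_def flip: ennreal_mult)
  also have "\<dots> = ennreal l"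
    by (rule suminf_ennreal_eq[OF _ sums_poisson_mean]) (simp add: l_def)
  finally show ?thesis by (simp add: N_def l_def F.emeasure_eq_measure)
qed

lemma poisson_process_campbell:
  assumes PP: "poisson_process M X mu" and f: "f \<in> borel_measurable mu"
  shows "(\<lambda>\<omega>. \<Sum>p\<in>X \<omega>. f p) \<in> borel_measurable M \<and>
         (\<integral>\<^sup>+\<omega>. (\<Sum>p\<in>X \<omega>. f p) \<partial>M) = integral\<^sup>N mu f"
  using f
proof (induction rule: borel_measurable_induct)
  case (cong f g)
  have "\<And>\<omega>. \<omega> \<in> space M \<Longrightarrow> (\<Sum>p\<in>X \<omega>. f p) = (\<Sum>p\<in>X \<omega>. g p)"
    using PP cong(3) unfolding poisson_process_def by (intro sum.cong) auto
  moreover have "integral\<^sup>N mu f = integral\<^sup>N mu g" using cong(3) by (intro nn_integral_cong) auto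
  ultimately show ?case using cong(4)
    by (metis (no_types, lifting) measurable_cong nn_integral_cong)
next
  case (set A)
  have card_eq: "(\<Sum>p\<in>X \<omega>. indicator A p) = (of_nat (card (X \<omega> \<inter> A)) :: ennreal)"
    if "\<omega> \<in> space M" for \<omega>
  proof -
    have "finite (X \<omega>)" using PP that by (simp add: poisson_process_def)
    then show ?thesis by (simp add: sum.If_cases indicator_def of_bool_def)
  qed
  have "(\<lambda>\<omega>. card (X \<omega> \<inter> A)) \<in> measurable M (count_space UNIV)"
    using PP set by (simp add: poisson_process_def)
  then have "(\<lambda>\<omega>. of_nat (card (X \<omega> \<inter> A)) :: ennreal) \<in> borel_measurable M"
    using measurable_compose[of _ M _ "of_nat" borel] by simp
  then have "(\<lambda>\<omega>. \<Sum>p\<in>X \<omega>. indicator A p :: ennreal) \<in> borel_measurable M"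
    using card_eq by (simp cong: measurable_cong)
  moreover have "(\<integral>\<^sup>+\<omega>. (\<Sum>p\<in>X \<omega>. indicator A p) \<partial>M) = emeasure mu A"
    using card_eq poisson_process_nn_integral_card[OF PP set] by (simp cong: nn_integral_cong)
  ultimately show ?case using set by simp
next
  case (mult u c)
  then show ?case
    by (simp add: sum_distrib_left[symmetric] nn_integral_cmult borel_measurable_times_ennreal)
next
  case (add u v)
  then show ?case
    by (simp add: sum.distrib nn_integral_add borel_measurable_add)
next
  case (seq U)
  have SUP_U: "(SUP i. U i) = (\<lambda>p. SUP i. U i p)" by (rule ext) (simp add: image_comp)
  have sum_SUP: "(\<Sum>p\<in>X \<omega>. (SUP i. U i) p) = (SUP i. \<Sum>p\<in>X \<omega>. U i p)" for \<omega>
    unfolding SUP_U using \<open>incseq U\<close>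
    by (intro ennreal_SUP_sum[symmetric]) (auto simp: incseq_def le_fun_def)
  have inc: "incseq (\<lambda>i \<omega>. \<Sum>p\<in>X \<omega>. U i p)"
    using \<open>incseq U\<close> by (auto simp: incseq_def le_fun_def intro!: sum_mono)
  have "(\<integral>\<^sup>+\<omega>. (\<Sum>p\<in>X \<omega>. (SUP i. U i) p) \<partial>M) = (SUP i. \<integral>\<^sup>+\<omega>. (\<Sum>p\<in>X \<omega>. U i p) \<partial>M)"
    unfolding sum_SUP using inc seq.IH by (intro nn_integral_monotone_convergence_SUP) auto
  also have "\<dots> = (SUP i. integral\<^sup>N mu (U i))" using seq.IH by simp
  also have "\<dots> = integral\<^sup>N mu (SUP i. U i)"
    unfolding SUP_U using \<open>incseq U\<close> seq(1) by (intro nn_integral_monotone_convergence_SUP[symmetric])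
  finally have "(\<integral>\<^sup>+\<omega>. (\<Sum>p\<in>X \<omega>. (SUP i. U i) p) \<partial>M) = integral\<^sup>N mu (SUP i. U i)" .
  moreover have "(\<lambda>\<omega>. \<Sum>p\<in>X \<omega>. (SUP i. U i) p) \<in> borel_measurable M"
    unfolding sum_SUP using seq.IH by (intro borel_measurable_SUP) auto
  ultimately show ?case by blast
qed

lemma expectation_D_in:
  fixes Q :: "real measure" and X :: "'w \<Rightarrow> ((real^'d) \<times> real) set"
  assumes "prob_space Q" and Qsets: "sets Q = sets borel"
    and PP: "poisson_process M X (torus_leb n \<Otimes>\<^sub>M Q)"
  shows "(\<integral>\<omega>. D_in \<alpha> n (X \<omega>) \<partial>M) =
     enn2real (\<integral>\<^sup>+ x. indicator (torus_box n :: (real^'d) set) x * ennreal (norm x powr \<alpha> * measure Q {norm x..}) \<partial>lborel)"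
proof -
  interpret Q: prob_space Q by fact
  define f where "f p = torus_dist n (fst p) 0 powr \<alpha> * indicator {p. torus_dist n (fst p) 0 \<le> snd p} p"
    for p :: "(real^'d) \<times> real"
  have f_nonneg: "f p \<ge> 0" for p by (simp add: f_def)
  have D_in_eq: "D_in \<alpha> n P = (\<Sum>p\<in>P. f p)" for P
    unfolding D_in_def f_def by (intro sum.cong) (auto simp: indicator_def)
  have f_borel: "(\<lambda>p. ennreal (f p)) \<in> borel_measurable (borel \<Otimes>\<^sub>M borel)"
    unfolding f_def by measurable
  have sets_mu: "sets (torus_leb n \<Otimes>\<^sub>M Q) = sets (borel \<Otimes>\<^sub>M borel)"
    unfolding torus_leb_def by (intro sets_pair_measure_cong) (auto simp: Qsets)
  have campbell: "(\<lambda>\<omega>. ennreal (D_in \<alpha> n (X \<omega>))) \<in> borel_measurable M \<and>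
      (\<integral>\<^sup>+\<omega>. ennreal (D_in \<alpha> n (X \<omega>)) \<partial>M) = (\<integral>\<^sup>+p. ennreal (f p) \<partial>(torus_leb n \<Otimes>\<^sub>M Q))"
    using poisson_process_campbell[OF PP, of "\<lambda>p. ennreal (f p)"] f_borel
    by (simp add: D_in_eq f_nonneg measurable_cong_sets[OF sets_mu refl])
  have inner: "(\<integral>\<^sup>+ r. ennreal (f (x, r)) \<partial>Q) = ennreal (norm x powr \<alpha> * measure Q {norm x..})"
    if "x \<in> torus_box n" for x
  proof -
    have "(\<lambda>r. ennreal (f (x, r))) = (\<lambda>r. ennreal (norm x powr \<alpha>) * indicator {norm x..} r)"
      using that by (auto simp: f_def torus_dist_0_eq_norm fun_eq_iff indicator_def)
    then show ?thesis
      using Qsets by (simp add: nn_integral_cmult_indicator Q.emeasure_eq_measure ennreal_mult)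
  qed
  have "(\<integral>\<omega>. D_in \<alpha> n (X \<omega>) \<partial>M) = enn2real (\<integral>\<^sup>+\<omega>. ennreal (D_in \<alpha> n (X \<omega>)) \<partial>M)"
    using campbell by (intro integral_eq_nn_integral) (auto simp: D_in_eq f_nonneg sum_nonneg)
  also have "(\<integral>\<^sup>+\<omega>. ennreal (D_in \<alpha> n (X \<omega>)) \<partial>M) = (\<integral>\<^sup>+ x. \<integral>\<^sup>+ r. ennreal (f (x, r)) \<partial>Q \<partial>torus_leb n)"
    using campbell Q.nn_integral_fst[of "\<lambda>p. ennreal (f p)"] f_borel
    by (simp add: measurable_cong_sets[OF sets_mu refl])
  also have "\<dots> = (\<integral>\<^sup>+ x. indicator (torus_box n) x * (\<integral>\<^sup>+ r. ennreal (f (x, r)) \<partial>Q) \<partial>lborel)"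
    using f_borel unfolding torus_leb_def
    by (subst nn_integral_density)
      (auto intro!: Q.borel_measurable_nn_integral_fst
        simp: measurable_cong_sets[OF sets_pair_measure_cong[OF refl Qsets] refl])
  also have "\<dots> = (\<integral>\<^sup>+ x. indicator (torus_box n :: (real^'d) set) x * ennreal (norm x powr \<alpha> * measure Q {norm x..}) \<partial>lborel)"
    by (intro nn_integral_cong) (simp add: indicator_def inner)
  finally show ?thesis .
qed

section \<open>Polar coordinates\<close>

definition radial_density :: "nat \<Rightarrow> real \<Rightarrow> real" where
  "radial_density D t = indicator {0..} t * (real D * unit_ball_vol (real D) * t ^ (D - 1))"

lemma radial_density_nonneg: "radial_density D t \<ge> 0"
  by (auto simp: radial_density_def indicator_def)

lemma borel_measurable_radial_density[measurable]: "radial_density D \<in> borel_measurable borel"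
  unfolding radial_density_def by measurable

lemma nn_integral_radial_density_lessThan:
  assumes D: "D \<ge> 1"
  shows "(\<integral>\<^sup>+t. ennreal (radial_density D t) * indicator {..<a} t \<partial>lborel) =
    (if a \<le> 0 then 0 else ennreal (unit_ball_vol (real D) * a ^ D))"
proof (cases "a \<le> 0")
  case True
  then have "(\<integral>\<^sup>+t. ennreal (radial_density D t) * indicator {..<a} t \<partial>lborel) = (\<integral>\<^sup>+t. 0 \<partial>(lborel :: real measure))"
    by (intro nn_integral_cong) (auto simp: radial_density_def indicator_def)
  then show ?thesis using True by simp
next
  case False
  define k where "k = unit_ball_vol (real D)"
  have "(\<integral>\<^sup>+t. ennreal (radial_density D t) * indicator {..<a} t \<partial>lborel) =
        (\<integral>\<^sup>+t. ennreal (real D * k * t ^ (D - 1)) * indicator {0..a} t \<partial>lborel)"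
  proof (rule nn_integral_cong_AE)
    show "AE t in lborel. ennreal (radial_density D t) * indicator {..<a} t =
        ennreal (real D * k * t ^ (D - 1)) * indicator {0..a} t"
      using AE_lborel_singleton[of a]
      by eventually_elim (auto simp: radial_density_def indicator_def k_def)
  qed
  also have "\<dots> = ennreal (k * a ^ D - k * 0 ^ D)"
    by (rule nn_integral_FTC_Icc[where F="\<lambda>t. k * t ^ D"])
      (use False in \<open>auto intro!: derivative_eq_intros simp: k_def\<close>)
  finally show ?thesis using False D by (simp add: k_def)
qed

lemma distr_norm_lborel:
  "distr (lborel :: 'a::euclidean_space measure) borel norm =
    density lborel (\<lambda>t. ennreal (radial_density DIM('a) t))"
proof (rule measure_eqI_generator_eq_countable[where E="range lessThan" and \<Omega>=UNIV
      and A="range (\<lambda>n::nat. {..<real n})"])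
  show "Int_stable (range lessThan :: real set set)"
  proof (clarsimp simp: Int_stable_def)
    fix a b :: real
    show "{..<a} \<inter> {..<b} \<in> range lessThan"
      by (rule image_eqI[of _ _ "min a b"]) auto
  qed
  have sets_borel: "sets (borel :: real measure) = sigma_sets UNIV (range lessThan)"
    by (subst borel_Iio) simp
  then show "sets (distr (lborel :: 'a measure) borel norm) = sigma_sets UNIV (range lessThan)"
    and "sets (density lborel (\<lambda>t. ennreal (radial_density DIM('a) t))) = sigma_sets UNIV (range lessThan)"
    by simp_all
  have ball: "emeasure (distr (lborel :: 'a measure) borel norm) {..<a} =
      (if a \<le> 0 then 0 else ennreal (unit_ball_vol (real DIM('a)) * a ^ DIM('a)))" for a
  proof -
    have "norm -` {..<a} \<inter> space lborel = (ball 0 a :: 'a set)"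
      by (auto simp: ball_def)
    then show ?thesis
      using emeasure_ball[of a "0::'a"] by (auto simp: emeasure_distr ball_empty)
  qed
  show "emeasure (distr (lborel :: 'a measure) borel norm) X =
      emeasure (density lborel (\<lambda>t. ennreal (radial_density DIM('a) t))) X"
    if "X \<in> range lessThan" for X
    using that ball nn_integral_radial_density_lessThan[of "DIM('a)"]
    by (auto simp: emeasure_density Suc_leI)
  show "\<Union> (range (\<lambda>n::nat. {..<real n})) = UNIV"
    using reals_Archimedean2 by auto
  show "emeasure (distr (lborel :: 'a measure) borel norm) X \<noteq> \<infinity>"
    if "X \<in> range (\<lambda>n::nat. {..<real n})" for X
    using that ball by (auto split: if_splits)
qed auto

lemma nn_integral_norm:
  fixes g :: "real \<Rightarrow> ennreal"
  assumes [measurable]: "g \<in> borel_measurable borel"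
  shows "(\<integral>\<^sup>+x. g (norm (x::'a::euclidean_space)) \<partial>lborel) =
    (\<integral>\<^sup>+t. ennreal (radial_density DIM('a) t) * g t \<partial>lborel)"
proof -
  have "(\<integral>\<^sup>+x. g (norm (x::'a)) \<partial>lborel) = (\<integral>\<^sup>+t. g t \<partial>distr (lborel :: 'a measure) borel norm)"
    by (subst nn_integral_distr) auto
  then show ?thesis
    by (simp add: distr_norm_lborel nn_integral_density)
qed

lemma radial_density_mult_powr:
  assumes "D \<ge> 1" "t \<ge> 0"
  shows "radial_density D t * t powr a = real D * unit_ball_vol (real D) * t powr (a + real D - 1)"
proof (cases "t = 0")
  case False
  then have "t ^ (D - 1) * t powr a = t powr (a + real D - 1)"
    using assms by (simp add: powr_realpow[symmetric] powr_add[symmetric] of_nat_diff algebra_simps)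
  then show ?thesis
    using assms by (simp add: radial_density_def mult_ac)
qed (simp add: radial_density_def)

lemma nn_integral_powr_Icc_0:
  assumes "q > -1" "c \<ge> 0"
  shows "(\<integral>\<^sup>+t. ennreal (indicator {0..c} t * t powr q) \<partial>lborel) = ennreal (c powr (q + 1) / (q + 1))"
  using nn_integral_has_integral_lebesgue[OF _ has_integral_powr_from_0[OF assms]] by simp

lemma nn_integral_powr_atLeast:
  assumes "e < -1" "a > 0"
  shows "(\<integral>\<^sup>+t. ennreal (indicator {a..} t * t powr e) \<partial>lborel) = ennreal (- (a powr (e + 1)) / (e + 1))"
  using nn_integral_has_integral_lebesgue[OF _ has_integral_powr_to_inf[OF assms]] assms by simp

lemma nn_integral_cball_norm:
  fixes g :: "real \<Rightarrow> real"
  assumes [measurable]: "g \<in> borel_measurable borel"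
  shows "(\<integral>\<^sup>+x. indicator (cball (0::'a::euclidean_space) R) x * ennreal (g (norm x)) \<partial>lborel) =
    (\<integral>\<^sup>+t. ennreal (radial_density DIM('a) t * g t * indicator {..R} t) \<partial>lborel)"
proof -
  have "(\<integral>\<^sup>+x. indicator (cball (0::'a) R) x * ennreal (g (norm x)) \<partial>lborel) =
      (\<integral>\<^sup>+x. (\<lambda>t. ennreal (g t * indicator {..R} t)) (norm (x::'a)) \<partial>lborel)"
    by (intro nn_integral_cong) (simp add: indicator_def)
  also have "\<dots> = (\<integral>\<^sup>+t. ennreal (radial_density DIM('a) t) * ennreal (g t * indicator {..R} t) \<partial>lborel)"
    by (rule nn_integral_norm) measurable
  finally show ?thesis
    by (simp add: ennreal_mult' radial_density_nonneg mult.assoc)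
qed

lemma nn_integral_radial_density_powr:
  assumes D: "D \<ge> 1" and R: "R \<ge> 0" and e: "e + real D > 0"
  shows "(\<integral>\<^sup>+t. ennreal (radial_density D t * t powr e * indicator {..R} t) \<partial>lborel) =
    ennreal (real D * unit_ball_vol (real D) * (R powr (e + real D) / (e + real D)))"
proof -
  define c where "c = real D * unit_ball_vol (real D)"
  have "(\<integral>\<^sup>+t. ennreal (radial_density D t * t powr e * indicator {..R} t) \<partial>lborel) =
      (\<integral>\<^sup>+t. ennreal c * ennreal (indicator {0..R} t * t powr (e + real D - 1)) \<partial>lborel)"
  proof (intro nn_integral_cong)
    fix t :: real
    show "ennreal (radial_density D t * t powr e * indicator {..R} t) =
        ennreal c * ennreal (indicator {0..R} t * t powr (e + real D - 1))"
      using radial_density_mult_powr[OF D, of t e]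
      by (cases "t \<ge> 0") (auto simp: indicator_def c_def radial_density_def ennreal_mult[symmetric])
  qed
  also have "\<dots> = ennreal c * ennreal (R powr (e + real D) / (e + real D))"
    using R e by (subst nn_integral_cmult) (auto simp: nn_integral_powr_Icc_0)
  also have "\<dots> = ennreal (c * (R powr (e + real D) / (e + real D)))"
    using e by (intro ennreal_mult[symmetric]) (auto simp: c_def)
  finally show ?thesis
    by (simp add: c_def)
qed

lemma nn_integral_cball_norm_powr:
  assumes "R \<ge> 0" "e + real DIM('a) > 0"
  shows "(\<integral>\<^sup>+y. indicator (cball (0::'a::euclidean_space) R) y * ennreal (norm y powr e) \<partial>lborel) =
    ennreal (real DIM('a) * unit_ball_vol (real DIM('a)) * (R powr (e + real DIM('a)) / (e + real DIM('a))))"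
  using nn_integral_cball_norm[of "\<lambda>t. t powr e" R, where 'a='a]
    nn_integral_radial_density_powr[of "DIM('a)" R e] assms
  by (simp add: Suc_leI)

section \<open>The fundamental domain\<close>

lemma cball_subset_torus_box:
  assumes "n \<ge> 1"
  shows "cball (0::real^'d) (real n / 4) \<subseteq> torus_box n"
proof
  fix x :: "real^'d" assume "x \<in> cball 0 (real n / 4)"
  then have "\<bar>x $ i\<bar> \<le> real n / 4" for i
    using component_le_norm_cart[of x i] by simp
  moreover have "real n \<ge> 1" using assms by simp
  ultimately have "- real n / 2 \<le> x $ i \<and> x $ i < real n / 2" for i
    using abs_le_iff[of "x $ i" "real n / 4"] by fastforce
  then show "x \<in> torus_box n"
    unfolding torus_box_def by blast
qed

lemma torus_box_subset_cball: "torus_box n \<subseteq> cball (0::real^'d) (real CARD('d) * real n)"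
proof
  fix x :: "real^'d" assume x: "x \<in> torus_box n"
  have "norm x \<le> (\<Sum>i\<in>UNIV. \<bar>x $ i\<bar>)" by (rule norm_le_l1_cart)
  also have "\<dots> \<le> (\<Sum>i\<in>(UNIV::'d set). real n)"
  proof (rule sum_mono)
    fix i
    have "- real n / 2 \<le> x $ i" "x $ i < real n / 2" using x by (auto simp: torus_box_def)
    then show "\<bar>x $ i\<bar> \<le> real n" by linarith
  qed
  finally show "x \<in> cball 0 (real CARD('d) * real n)" by simp
qed

lemma torus_box_mono:
  assumes "m \<le> n"
  shows "torus_box m \<subseteq> (torus_box n :: (real^'d) set)"
proof
  fix x :: "real^'d" assume "x \<in> torus_box m"
  then have "- real m / 2 \<le> x $ i \<and> x $ i < real m / 2" for i
    by (simp add: torus_box_def)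
  moreover have "real m \<le> real n" using assms by simp
  ultimately have "- real n / 2 \<le> x $ i \<and> x $ i < real n / 2" for i
    by (smt (verit, best) field_sum_of_halves)
  then show "x \<in> torus_box n"
    unfolding torus_box_def by blast
qed

lemma scaleR_mem_torus_box_iff:
  assumes "n \<ge> 1"
  shows "real n *\<^sub>R y \<in> torus_box n \<longleftrightarrow> y \<in> torus_box 1"
proof -
  have n: "real n > 0" using assms by simp
  have "- real n / 2 \<le> real n * a \<and> real n * a < real n / 2 \<longleftrightarrow> - 1 / 2 \<le> a \<and> a < 1 / 2" for a :: real
    using mult_le_cancel_left_pos[OF n, of "- 1 / 2" a] mult_less_cancel_left_pos[OF n, of a "1 / 2"]
    by simp
  then show ?thesis by (simp add: torus_box_def)
qed

lemma nn_integral_torus_box_rescale: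
  fixes g :: "real \<Rightarrow> ennreal"
  assumes [measurable]: "g \<in> borel_measurable borel" and n: "n \<ge> 1"
  shows "(\<integral>\<^sup>+x. indicator (torus_box n :: (real^'d) set) x * g (norm x) \<partial>lborel) =
    ennreal (real n ^ CARD('d)) *
      (\<integral>\<^sup>+y. indicator (torus_box 1 :: (real^'d) set) y * g (real n * norm y) \<partial>lborel)"
proof -
  have n0: "real n > 0" using n by simp
  have affine: "(lborel :: (real^'d) measure) =
      density (distr lborel borel (\<lambda>x. 0 + real n *\<^sub>R x)) (\<lambda>_. ennreal (\<bar>real n\<bar> ^ DIM(real^'d)))"
    using n0 by (intro lborel_affine) auto
  have "(\<integral>\<^sup>+x. indicator (torus_box n :: (real^'d) set) x * g (norm x) \<partial>lborel) =
      (\<integral>\<^sup>+x. ennreal (real n ^ CARD('d)) * (indicator (torus_box n :: (real^'d) set) x * g (norm x))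
        \<partial>distr lborel borel (\<lambda>x. 0 + real n *\<^sub>R x))"
    by (subst affine) (simp add: nn_integral_density)
  also have "\<dots> = (\<integral>\<^sup>+y. ennreal (real n ^ CARD('d)) *
        (indicator (torus_box n :: (real^'d) set) (real n *\<^sub>R y) * g (norm (real n *\<^sub>R y))) \<partial>lborel)"
    by (subst nn_integral_distr) auto
  also have "\<dots> = ennreal (real n ^ CARD('d)) *
      (\<integral>\<^sup>+y. indicator (torus_box 1 :: (real^'d) set) y * g (real n * norm y) \<partial>lborel)"
    using n0 by (subst nn_integral_cmult) (auto simp: scaleR_mem_torus_box_iff[OF n] indicator_def)
  finally show ?thesis .
qed

lemma null_sets_component_hyperplane: "{x::real^'d. x $ i = c} \<in> null_sets lborel"
proof -
  have "{x::real^'d. x $ i = c} = {x. axis i 1 \<bullet> x = c}"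
    by (simp add: cart_eq_inner_axis inner_commute)
  moreover have "negligible {x::real^'d. axis i 1 \<bullet> x = c}"
    by (rule negligible_hyperplane) (simp add: axis_eq_0_iff)
  ultimately have "{x::real^'d. x $ i = c} \<in> null_sets lebesgue"
    by (simp add: negligible_iff_null_sets)
  then show ?thesis
    by (simp add: null_sets_completion_iff)
qed

lemma integral_cbox_half_eq_torus_box_1:
  fixes f :: "real^'d \<Rightarrow> real"
  assumes [measurable]: "f \<in> borel_measurable borel"
  shows "(\<integral>\<eta>. f \<eta> \<partial>restrict_space lborel (cbox (\<chi> i. - 1 / 2) (\<chi> i. 1 / 2))) =
    (\<integral>\<eta>. indicator (torus_box 1) \<eta> * f \<eta> \<partial>lborel)"
proof -
  have "AE \<eta> in lborel. \<forall>i\<in>UNIV. \<eta> \<notin> {x::real^'d. x $ i = 1 / 2}"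
    by (intro AE_finite_allI AE_not_in null_sets_component_hyperplane) auto
  then have AE_eq: "AE \<eta> in lborel. indicator (cbox (\<chi> i. - 1 / 2) (\<chi> i. 1 / 2)) \<eta> *\<^sub>R f \<eta> =
      indicator (torus_box 1) \<eta> * f \<eta>"
  proof eventually_elim
    case (elim \<eta>)
    then have "\<eta> \<in> cbox (\<chi> i. - 1 / 2) (\<chi> i. 1 / 2) \<longleftrightarrow> \<eta> \<in> torus_box 1"
      by (auto simp: torus_box_def mem_box_cart less_le)
    then show ?case by (simp add: indicator_def)
  qed
  have "(\<integral>\<eta>. f \<eta> \<partial>restrict_space lborel (cbox (\<chi> i. - 1 / 2) (\<chi> i. 1 / 2))) =
      (\<integral>\<eta>. indicator (cbox (\<chi> i. - 1 / 2) (\<chi> i. 1 / 2)) \<eta> *\<^sub>R f \<eta> \<partial>lborel)"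
    by (rule integral_restrict_space) simp
  also have "\<dots> = (\<integral>\<eta>. indicator (torus_box 1) \<eta> * f \<eta> \<partial>lborel)"
    using AE_eq by (intro integral_cong_AE) auto
  finally show ?thesis .
qed

lemma integrable_torus_box_1_norm_powr:
  assumes "e + real CARD('d) > 0"
  shows "integrable lborel (\<lambda>y::real^'d. indicator (torus_box 1) y * norm y powr e)"
proof (rule integrableI_bounded)
  show "(\<lambda>y::real^'d. indicator (torus_box 1) y * norm y powr e) \<in> borel_measurable lborel"
    by measurable
  have "(\<integral>\<^sup>+y. ennreal (norm (indicator (torus_box 1 :: (real^'d) set) y * norm y powr e)) \<partial>lborel) \<le>
      (\<integral>\<^sup>+y. indicator (cball (0::real^'d) (real CARD('d))) y * ennreal (norm y powr e) \<partial>lborel)"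
    using torus_box_subset_cball[of 1, where 'd='d]
    by (intro nn_integral_mono) (auto simp: indicator_def)
  also have "\<dots> < \<infinity>"
    using assms by (subst nn_integral_cball_norm_powr) auto
  finally show "(\<integral>\<^sup>+y. ennreal (norm (indicator (torus_box 1 :: (real^'d) set) y * norm y powr e)) \<partial>lborel) < \<infinity>" .
qed

section \<open>Logarithmic averages\<close>

lemma has_bochner_integral_inverse:
  fixes q a b :: real
  assumes "0 < a" "a \<le> b"
  shows "has_bochner_integral lborel (\<lambda>t. (q / t) * indicator {a..b} t) (q * ln b - q * ln a)"
  using assms
  by (intro has_bochner_integral_FTC_Icc_real[where F="\<lambda>t. q * ln t"])
    (auto intro!: derivative_eq_intros continuous_intros simp: field_simps)

lemma integrable_le_inverse:
  fixes k :: "real \<Rightarrow> real"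
  assumes [measurable]: "k \<in> borel_measurable borel" and nonneg: "\<And>t. 0 \<le> k t"
    and le: "\<And>t. t \<ge> a \<Longrightarrow> k t \<le> B / t" and a: "0 < a"
  shows "integrable lborel (\<lambda>t. k t * indicator {a..b} t)"
proof (cases "a \<le> b")
  case True
  have "0 \<le> B / a"
    using le[of a] nonneg[of a] by linarith
  then have "B \<ge> 0"
    using a by (simp add: zero_le_divide_iff)
  have "integrable lborel (\<lambda>t. (B / t) * indicator {a..b} t)"
    using has_bochner_integral_inverse[OF a True] by (rule integrable.intros)
  then show ?thesis
    by (rule Bochner_Integration.integrable_bound)
      (use le nonneg a \<open>B \<ge> 0\<close> in \<open>auto simp: indicator_def intro!: AE_I2\<close>)
qed (simp add: indicator_def)

lemma integral_bounds_from_inverse_bounds: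
  fixes k :: "real \<Rightarrow> real"
  assumes int: "integrable lborel (\<lambda>t. k t * indicator {T..R} t)" and T: "0 < T" "T \<le> R"
    and bounds: "\<And>t. T \<le> t \<Longrightarrow> a \<le> t * k t \<and> t * k t \<le> b"
  shows "a * (ln R - ln T) \<le> (\<integral>t. k t * indicator {T..R} t \<partial>lborel)"
    and "(\<integral>t. k t * indicator {T..R} t \<partial>lborel) \<le> b * (ln R - ln T)"
proof -
  have ln: "(\<integral>t. (q / t) * indicator {T..R} t \<partial>lborel) = q * (ln R - ln T)" for q
    using has_bochner_integral_inverse[OF T, of q] by (simp add: has_bochner_integral_iff algebra_simps)
  have int_q: "integrable lborel (\<lambda>t. (q / t) * indicator {T..R} t)" for q
    using has_bochner_integral_inverse[OF T] by (rule integrable.intros)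
  have "a / t \<le> k t" "k t \<le> b / t" if "T \<le> t" for t
    using bounds[OF that] T that by (auto simp: divide_le_eq le_divide_eq mult.commute)
  then have "(a / t) * indicator {T..R} t \<le> k t * indicator {T..R} t"
    and "k t * indicator {T..R} t \<le> (b / t) * indicator {T..R} t" for t
    by (auto simp: indicator_def)
  then show "a * (ln R - ln T) \<le> (\<integral>t. k t * indicator {T..R} t \<partial>lborel)"
    and "(\<integral>t. k t * indicator {T..R} t \<partial>lborel) \<le> b * (ln R - ln T)"
    unfolding ln[symmetric] using int int_q by (auto intro!: integral_mono)
qed

lemma tendsto_integral_div_ln:
  fixes k :: "real \<Rightarrow> real"
  assumes k[measurable]: "k \<in> borel_measurable borel" and nonneg: "\<And>t. 0 \<le> k t"
    and le: "\<And>t. t \<ge> 1 \<Longrightarrow> k t \<le> B / t"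
    and lim: "((\<lambda>t. t * k t) \<longlongrightarrow> L) at_top"
  shows "((\<lambda>R. (\<integral>t. k t * indicator {1..R} t \<partial>lborel) / ln R) \<longlongrightarrow> L) at_top"
proof (rule tendstoI)
  fix e :: real assume e: "e > 0"
  have "eventually (\<lambda>t. dist (t * k t) L < e / 2 \<and> t \<ge> 1) at_top"
    using lim e by (intro eventually_conj tendstoD eventually_ge_at_top) auto
  then obtain T where T: "T \<ge> 1" and near: "\<And>t. t \<ge> T \<Longrightarrow> \<bar>t * k t - L\<bar> < e / 2"
    by (auto simp: eventually_at_top_linorder dist_real_def)
  have int: "integrable lborel (\<lambda>t. k t * indicator {a..b} t)" if "1 \<le> a" for a b
    by (rule integrable_le_inverse[where B=B]) (use that k nonneg le in auto)
  define P where "P = (\<integral>t. k t * indicator {1..T} t \<partial>lborel)"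
  define I where "I R = (\<integral>t. k t * indicator {T..R} t \<partial>lborel)" for R
  have split: "(\<integral>t. k t * indicator {1..R} t \<partial>lborel) = P + I R" if "T \<le> R" for R
  proof -
    have "AE t in lborel. k t * indicator {1..R} t = k t * indicator {1..T} t + k t * indicator {T..R} t"
      using AE_lborel_singleton[of T] by eventually_elim (use that T in \<open>auto simp: indicator_def\<close>)
    then have "(\<integral>t. k t * indicator {1..R} t \<partial>lborel) =
        (\<integral>t. k t * indicator {1..T} t + k t * indicator {T..R} t \<partial>lborel)"
      by (intro integral_cong_AE) auto
    also have "\<dots> = P + I R"
      unfolding P_def I_def using T by (intro Bochner_Integration.integral_add int) auto
    finally show ?thesis .
  qed
  have near_bounds: "L - e / 2 \<le> t * k t \<and> t * k t \<le> L + e / 2" if "T \<le> t" for t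
    using near[OF that] by linarith
  have bounds: "(L - e / 2) * (ln R - ln T) \<le> I R" "I R \<le> (L + e / 2) * (ln R - ln T)"
    if "T \<le> R" for R
    unfolding I_def using integral_bounds_from_inverse_bounds[OF int[OF T] _ that near_bounds] T by auto
  have "((\<lambda>R. (P + (L - e / 2) * (ln R - ln T)) / ln R) \<longlongrightarrow> L - e / 2) at_top"
    and "((\<lambda>R. (P + (L + e / 2) * (ln R - ln T)) / ln R) \<longlongrightarrow> L + e / 2) at_top"
    by real_asymp+
  then have "eventually (\<lambda>R. L - e < (P + (L - e / 2) * (ln R - ln T)) / ln R) at_top"
    and "eventually (\<lambda>R. (P + (L + e / 2) * (ln R - ln T)) / ln R < L + e) at_top"
    using e by (auto elim: order_tendstoD)
  moreover have "eventually (\<lambda>R. R \<ge> T \<and> R > 1) at_top"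
    by (intro eventually_conj eventually_ge_at_top eventually_gt_at_top)
  ultimately show "eventually (\<lambda>R. dist ((\<integral>t. k t * indicator {1..R} t \<partial>lborel) / ln R) L < e) at_top"
  proof eventually_elim
    case (elim R)
    then have "(P + (L - e / 2) * (ln R - ln T)) / ln R \<le> (P + I R) / ln R"
      and "(P + I R) / ln R \<le> (P + (L + e / 2) * (ln R - ln T)) / ln R"
      using bounds[of R] by (auto intro: divide_right_mono)
    then show ?case
      using elim by (simp add: split dist_real_def abs_less_iff)
  qed
qed

lemma tendsto_ln_scaled_div_ln:
  assumes "a > 0"
  shows "(\<lambda>n. ln (a * real n) / ln (real n)) \<longlonglongrightarrow> 1"
proof -
  have "(\<lambda>n. ln a / ln (real n) + 1) \<longlonglongrightarrow> 0 + 1"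
    by (intro tendsto_add tendsto_const tendsto_divide_0[OF tendsto_const] filterlim_at_top_imp_at_infinity
        filterlim_compose[OF ln_at_top filterlim_real_sequentially])
  then have "(\<lambda>n. ln a / ln (real n) + 1) \<longlonglongrightarrow> 1"
    by simp
  then show ?thesis
    by (rule Lim_transform_eventually)
      (use assms in \<open>auto simp: ln_mult field_simps eventually_sequentially intro!: exI[of _ 2]\<close>)
qed

lemma tendsto_div_ln_sandwich:
  fixes f :: "real \<Rightarrow> real" and g :: "nat \<Rightarrow> real"
  assumes lim: "((\<lambda>R. f R / ln R) \<longlongrightarrow> L) at_top" and a: "a > 0" and b: "b > 0"
    and bounds: "eventually (\<lambda>n. f (a * real n) \<le> g n \<and> g n \<le> f (b * real n)) sequentially"
  shows "(\<lambda>n. g n / ln (real n)) \<longlonglongrightarrow> L"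
proof -
  have scaled: "(\<lambda>n. f (c * real n) / ln (c * real n) * (ln (c * real n) / ln (real n))) \<longlonglongrightarrow> L * 1"
    and large: "eventually (\<lambda>n. 1 < c * real n) sequentially" if "c > 0" for c
  proof -
    have c: "filterlim (\<lambda>n. c * real n) at_top sequentially"
      using that by (intro filterlim_tendsto_pos_mult_at_top[OF tendsto_const _ filterlim_real_sequentially])
    then show "(\<lambda>n. f (c * real n) / ln (c * real n) * (ln (c * real n) / ln (real n))) \<longlonglongrightarrow> L * 1"
      using that by (intro tendsto_mult filterlim_compose[OF lim] tendsto_ln_scaled_div_ln)
    show "eventually (\<lambda>n. 1 < c * real n) sequentially"
      using c by (simp add: filterlim_at_top_dense)
  qed
  have "(\<lambda>n. g n / ln (real n)) \<longlonglongrightarrow> L * 1"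
  proof (rule tendsto_sandwich[OF _ _ scaled[OF a] scaled[OF b]])
    show "eventually (\<lambda>n. f (a * real n) / ln (a * real n) * (ln (a * real n) / ln (real n)) \<le> g n / ln (real n)) sequentially"
      using bounds large[OF a] eventually_gt_at_top[of "1::nat"]
    proof eventually_elim
      case (elim n)
      then have "ln (a * real n) > 0" "ln (real n) > 0" by auto
      then show ?case using elim by (simp add: divide_right_mono)
    qed
    show "eventually (\<lambda>n. g n / ln (real n) \<le> f (b * real n) / ln (b * real n) * (ln (b * real n) / ln (real n))) sequentially"
      using bounds large[OF b] eventually_gt_at_top[of "1::nat"]
    proof eventually_elim
      case (elim n)
      then have "ln (b * real n) > 0" "ln (real n) > 0" by auto
      then show ?case using elim by (simp add: divide_right_mono)
    qed
  qed
  then show ?thesis by simp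
qed

section \<open>Power-law tails\<close>

locale power_tail_marks =
  fixes Q :: "real measure" and \<alpha> \<beta> s :: real
  assumes prob_space_Q: "prob_space Q" and sets_Q: "sets Q = sets borel"
    and Q_nonneg: "emeasure Q {..<0} = 0"
    and Q_ac: "absolutely_continuous lborel Q"
    and \<beta>_pos: "\<beta> > 0" and s_pos: "s > 0"
    and tail: "((\<lambda>h. h powr s * measure Q {h<..}) \<longlongrightarrow> \<beta>) at_top"
    and \<alpha>_pos: "\<alpha> > 0"
begin

interpretation Q: prob_space Q by (rule prob_space_Q)

definition survival :: "real \<Rightarrow> real" where
  "survival t = measure Q {t..}"

lemma survival_nonneg: "survival t \<ge> 0"
  by (simp add: survival_def)

lemma survival_le_1: "survival t \<le> 1"
  by (simp add: survival_def)

lemma survival_eq_greaterThan: "survival t = measure Q {t<..}"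
proof -
  have "{t} \<in> null_sets lborel" by (simp add: null_sets_def)
  then have null: "{t} \<in> null_sets Q"
    using Q_ac by (auto simp: absolutely_continuous_def)
  have "{t..} = {t<..} \<union> {t}" by auto
  then show ?thesis
    unfolding survival_def using measure_Un_null_set[OF _ null, of "{t<..}"] sets_Q by simp
qed

lemma survival_antimono: "x \<le> y \<Longrightarrow> survival y \<le> survival x"
  unfolding survival_def using sets_Q by (intro Q.finite_measure_mono) auto

lemma borel_measurable_survival[measurable]: "survival \<in> borel_measurable borel"
proof -
  have "mono (\<lambda>t. - survival t)"
    by (auto simp: mono_def survival_antimono)
  then have "(\<lambda>t. - (- survival t)) \<in> borel_measurable borel"
    by (intro borel_measurable_uminus borel_measurable_mono)
  then show ?thesis by simp
qed

lemma tendsto_powr_survival: "((\<lambda>t. t powr s * survival t) \<longlongrightarrow> \<beta>) at_top"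
  using tail by (simp add: survival_eq_greaterThan)

lemma powr_survival_bounded:
  obtains C where "C > 0" "\<And>t. t \<ge> 0 \<Longrightarrow> t powr s * survival t \<le> C"
proof -
  have "eventually (\<lambda>t. t powr s * survival t < \<beta> + 1) at_top"
    using tendsto_powr_survival by (rule order_tendstoD) simp
  then obtain T where T: "\<And>t. t \<ge> T \<Longrightarrow> t powr s * survival t < \<beta> + 1"
    by (auto simp: eventually_at_top_linorder)
  have "t powr s * survival t \<le> max (\<beta> + 1) (max T 0 powr s)" if "t \<ge> 0" for t
  proof (cases "t \<ge> T")
    case False
    have "t powr s * survival t \<le> t powr s"
      using survival_le_1 survival_nonneg by (simp add: mult_left_le)
    also have "\<dots> \<le> max T 0 powr s"
      using False that s_pos by (intro powr_mono2) auto
    finally show ?thesis by simp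
  qed (use T in force)
  then show ?thesis
    using \<beta>_pos by (intro that[of "max (\<beta> + 1) (max T 0 powr s)"]) auto
qed

definition weight :: "real \<Rightarrow> real" where
  "weight t = t powr \<alpha> * survival t"

lemma weight_nonneg: "weight t \<ge> 0"
  by (simp add: weight_def survival_nonneg)

lemma borel_measurable_weight[measurable]: "weight \<in> borel_measurable borel"
  unfolding weight_def by measurable

lemma radial_density_mult_weight:
  assumes "D \<ge> 1" "t \<ge> 0"
  shows "radial_density D t * weight t =
    real D * unit_ball_vol (real D) * (t powr (\<alpha> + real D - 1) * survival t)"
  using radial_density_mult_powr[OF assms, of \<alpha>] by (simp add: weight_def mult_ac)

lemma radial_weight_le_tail_bound:
  assumes D: "D \<ge> 1" and t: "t \<ge> 0" and C: "\<And>t. t \<ge> 0 \<Longrightarrow> t powr s * survival t \<le> C"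
  shows "radial_density D t * weight t \<le> real D * unit_ball_vol (real D) * C * t powr (\<alpha> + real D - 1 - s)"
proof -
  have "t powr (\<alpha> + real D - 1) = t powr (\<alpha> + real D - 1 - s) * t powr s"
    by (simp add: powr_add[symmetric])
  then have "t powr (\<alpha> + real D - 1) * survival t = t powr (\<alpha> + real D - 1 - s) * (t powr s * survival t)"
    by simp
  also have "\<dots> \<le> t powr (\<alpha> + real D - 1 - s) * C"
    using C[OF t] by (intro mult_left_mono) auto
  finally have "real D * unit_ball_vol (real D) * (t powr (\<alpha> + real D - 1) * survival t) \<le>
      real D * unit_ball_vol (real D) * (t powr (\<alpha> + real D - 1 - s) * C)"
    by (rule mult_left_mono) simp
  then show ?thesis
    using radial_density_mult_weight[OF D t] by (simp add: mult_ac)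
qed

lemma nn_integral_radial_weight:
  assumes D: "D \<ge> 1"
  shows "(\<integral>\<^sup>+t. ennreal (radial_density D t * weight t) \<partial>lborel) =
    ennreal (real D * unit_ball_vol (real D) / (\<alpha> + real D)) * (\<integral>\<^sup>+r. ennreal (r powr (\<alpha> + real D)) \<partial>Q)"
proof -
  define c where "c = real D * unit_ball_vol (real D)"
  have c: "c \<ge> 0" by (simp add: c_def)
  interpret pair_sigma_finite lborel Q
    by (intro pair_sigma_finite.intro lborel.sigma_finite_measure_axioms Q.sigma_finite_measure_axioms)
  have sets_lborel_Q: "sets (lborel \<Otimes>\<^sub>M Q) = sets (borel \<Otimes>\<^sub>M borel)"
    by (intro sets_pair_measure_cong) (auto simp: sets_Q)
  define f where "f t = ennreal (radial_density D t * t powr \<alpha>)" for t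
  have inner: "(\<integral>\<^sup>+t. f t * indicator {t..} r \<partial>lborel) =
      ennreal (c / (\<alpha> + real D)) * ennreal (r powr (\<alpha> + real D))"
    if r: "r \<ge> 0" for r
  proof -
    have "(\<integral>\<^sup>+t. f t * indicator {t..} r \<partial>lborel) =
        (\<integral>\<^sup>+t. ennreal (radial_density D t * t powr \<alpha> * indicator {..r} t) \<partial>lborel)"
      by (intro nn_integral_cong) (simp add: f_def indicator_def)
    also have "\<dots> = ennreal (c / (\<alpha> + real D)) * ennreal (r powr (\<alpha> + real D))"
      using D r \<alpha>_pos c by (simp add: nn_integral_radial_density_powr c_def flip: ennreal_mult)
    finally show ?thesis .
  qed
  have "(\<integral>\<^sup>+t. ennreal (radial_density D t * weight t) \<partial>lborel) =
      (\<integral>\<^sup>+t. \<integral>\<^sup>+r. f t * indicator {t..} r \<partial>Q \<partial>lborel)"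
    using sets_Q
    by (intro nn_integral_cong)
      (simp add: f_def weight_def survival_def Q.emeasure_eq_measure nn_integral_cmult_indicator
        radial_density_nonneg survival_nonneg mult.assoc flip: ennreal_mult)
  also have "\<dots> = (\<integral>\<^sup>+r. \<integral>\<^sup>+t. f t * indicator {t..} r \<partial>lborel \<partial>Q)"
  proof (rule Fubini'[symmetric])
    have "(\<lambda>p. f (fst p) * indicator {p. fst p \<le> snd p} p) \<in> borel_measurable (borel \<Otimes>\<^sub>M borel)"
      unfolding f_def by measurable
    then show "case_prod (\<lambda>t r. f t * indicator {t..} r) \<in> borel_measurable (lborel \<Otimes>\<^sub>M Q)"
      unfolding measurable_cong_sets[OF sets_lborel_Q refl]
      by (simp add: case_prod_beta' indicator_def)
  qed
  also have "\<dots> = (\<integral>\<^sup>+r. ennreal (c / (\<alpha> + real D)) * ennreal (r powr (\<alpha> + real D)) \<partial>Q)"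
  proof (rule nn_integral_cong_AE)
    have "AE r in Q. r \<ge> 0"
      using Q_nonneg sets_Q by (intro AE_I'[of "{..<0}"]) (auto simp: null_sets_def)
    then show "AE r in Q. (\<integral>\<^sup>+t. f t * indicator {t..} r \<partial>lborel) =
        ennreal (c / (\<alpha> + real D)) * ennreal (r powr (\<alpha> + real D))"
      by eventually_elim (rule inner)
  qed
  also have "\<dots> = ennreal (c / (\<alpha> + real D)) * (\<integral>\<^sup>+r. ennreal (r powr (\<alpha> + real D)) \<partial>Q)"
  proof (rule nn_integral_cmult)
    show "(\<lambda>r. ennreal (r powr (\<alpha> + real D))) \<in> borel_measurable Q"
      unfolding measurable_cong_sets[OF sets_Q refl] by measurable
  qed
  finally show ?thesis by (simp add: c_def)
qed

lemma nn_integral_radial_weight_finite: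
  assumes D: "D \<ge> 1" and super: "s > \<alpha> + real D"
  shows "(\<integral>\<^sup>+t. ennreal (radial_density D t * weight t) \<partial>lborel) < \<infinity>"
proof -
  obtain C where C: "C > 0" "\<And>t. t \<ge> 0 \<Longrightarrow> t powr s * survival t \<le> C"
    using powr_survival_bounded by blast
  define c where "c = real D * unit_ball_vol (real D)"
  have c: "c \<ge> 0" by (simp add: c_def)
  have bound: "ennreal (radial_density D t * weight t) \<le>
      ennreal (radial_density D t * t powr \<alpha> * indicator {..1} t) +
      ennreal (c * C) * ennreal (indicator {1..} t * t powr (\<alpha> + real D - 1 - s))" for t
  proof (cases "t \<le> 1")
    case True
    have "weight t \<le> t powr \<alpha>"
      using survival_le_1 by (simp add: weight_def mult_left_le)
    then have "radial_density D t * weight t \<le> radial_density D t * t powr \<alpha> * indicator {..1} t"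
      using True by (simp add: mult_left_mono radial_density_nonneg)
    then show ?thesis
      by (simp add: add_increasing2 ennreal_leI)
  next
    case False
    then have "radial_density D t * weight t \<le> c * C * (indicator {1..} t * t powr (\<alpha> + real D - 1 - s))"
      using radial_weight_le_tail_bound[OF D _ C(2), of t] by (simp add: c_def)
    then show ?thesis
      using c C by (simp add: add_increasing ennreal_leI flip: ennreal_mult)
  qed
  have "(\<integral>\<^sup>+t. ennreal (radial_density D t * weight t) \<partial>lborel) \<le>
      (\<integral>\<^sup>+t. ennreal (radial_density D t * t powr \<alpha> * indicator {..1} t) \<partial>lborel) +
      ennreal (c * C) * (\<integral>\<^sup>+t. ennreal (indicator {1..} t * t powr (\<alpha> + real D - 1 - s)) \<partial>lborel)"
    using bound by (subst nn_integral_cmult[symmetric], simp, subst nn_integral_add[symmetric])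
      (auto intro!: nn_integral_mono)
  also have "\<dots> < \<infinity>"
    using D \<alpha>_pos super
    by (simp add: nn_integral_radial_density_powr nn_integral_powr_atLeast ennreal_mult_less_top)
  finally show ?thesis .
qed

lemma nn_integral_cball_weight_finite:
  assumes "R \<ge> 0"
  shows "(\<integral>\<^sup>+x. indicator (cball (0::'a::euclidean_space) R) x * ennreal (weight (norm x)) \<partial>lborel) < \<infinity>"
proof -
  have "(\<integral>\<^sup>+x. indicator (cball (0::'a) R) x * ennreal (weight (norm x)) \<partial>lborel) \<le>
      (\<integral>\<^sup>+x. indicator (cball (0::'a) R) x * ennreal (norm x powr \<alpha>) \<partial>lborel)"
    using survival_le_1 survival_nonneg
    by (intro nn_integral_mono mult_left_mono ennreal_leI) (auto simp: weight_def mult_left_le)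
  also have "\<dots> < \<infinity>"
    using assms \<alpha>_pos by (subst nn_integral_cball_norm_powr) auto
  finally show ?thesis .
qed

lemma tendsto_box_weight_supercritical:
  assumes super: "s > \<alpha> + real CARD('d)"
  shows "(\<lambda>n. enn2real (\<integral>\<^sup>+x. indicator (torus_box n :: (real^'d) set) x * ennreal (weight (norm x)) \<partial>lborel))
    \<longlonglongrightarrow> real CARD('d) * unit_ball_vol (real CARD('d)) / (\<alpha> + real CARD('d)) * (\<integral>r. r powr (\<alpha> + real CARD('d)) \<partial>Q)"
proof -
  define D where "D = CARD('d)"
  have D: "D \<ge> 1" by (simp add: D_def Suc_leI)
  define total where "total = (\<integral>\<^sup>+x. ennreal (weight (norm (x::real^'d))) \<partial>lborel)"
  have total_radial: "total = (\<integral>\<^sup>+t. ennreal (radial_density D t * weight t) \<partial>lborel)"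
    unfolding total_def D_def using nn_integral_norm[of "\<lambda>t. ennreal (weight t)", where 'a="real^'d"]
    by (simp add: ennreal_mult' radial_density_nonneg)
  have "(\<lambda>n. \<integral>\<^sup>+x. indicator (torus_box n :: (real^'d) set) x * ennreal (weight (norm x)) \<partial>lborel) \<longlonglongrightarrow> total"
    unfolding total_def
  proof (rule nn_integral_LIMSEQ)
    show "incseq (\<lambda>n x. indicator (torus_box n :: (real^'d) set) x * ennreal (weight (norm x)))"
      using torus_box_mono
      by (auto simp: incseq_def le_fun_def indicator_def subset_iff intro!: mult_right_mono)
    fix x :: "real^'d"
    obtain N :: nat where N: "norm x * 4 \<le> real N" using real_arch_simple by blast
    have "x \<in> torus_box n" if "n \<ge> max N 1" for n
      using cball_subset_torus_box[of n, where 'd='d] N that by auto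
    then have "eventually (\<lambda>n. indicator (torus_box n) x * ennreal (weight (norm x)) = ennreal (weight (norm x))) sequentially"
      unfolding eventually_sequentially by (intro exI[of _ "max N 1"]) simp
    then show "(\<lambda>n. indicator (torus_box n) x * ennreal (weight (norm x))) \<longlonglongrightarrow> ennreal (weight (norm x))"
      by (rule tendsto_eventually)
  qed measurable
  moreover have "total < \<infinity>"
    using nn_integral_radial_weight_finite[OF D] super by (simp add: total_radial D_def)
  ultimately have lim: "(\<lambda>n. enn2real (\<integral>\<^sup>+x. indicator (torus_box n :: (real^'d) set) x * ennreal (weight (norm x)) \<partial>lborel))
      \<longlonglongrightarrow> enn2real total"
    by (intro tendsto_enn2real) auto
  have "(\<integral>r. r powr (\<alpha> + real D) \<partial>Q) = enn2real (\<integral>\<^sup>+r. ennreal (r powr (\<alpha> + real D)) \<partial>Q)"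
    by (rule integral_eq_nn_integral) (auto simp: measurable_cong_sets[OF sets_Q refl])
  then have "enn2real total = real D * unit_ball_vol (real D) / (\<alpha> + real D) * (\<integral>r. r powr (\<alpha> + real D) \<partial>Q)"
    unfolding total_radial nn_integral_radial_weight[OF D] using \<alpha>_pos by (simp add: enn2real_mult)
  with lim show ?thesis
    by (simp add: D_def)
qed

lemma powr_mult_weight_scaled:
  assumes "n > 0" "t > 0"
  shows "n powr (s - \<alpha>) * weight (n * t) = t powr (\<alpha> - s) * ((n * t) powr s * survival (n * t))"
proof -
  have "n powr (s - \<alpha>) * weight (n * t) = (n powr (s - \<alpha>) * n powr \<alpha>) * t powr \<alpha> * survival (n * t)"
    using assms by (simp add: weight_def powr_mult mult_ac)
  also have "n powr (s - \<alpha>) * n powr \<alpha> = n powr s" by (simp add: powr_add[symmetric])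
  also have "t powr \<alpha> = t powr (\<alpha> - s) * t powr s" by (simp add: powr_add[symmetric])
  finally show ?thesis using assms by (simp add: powr_mult mult_ac)
qed

lemma tendsto_scaled_weight:
  assumes t: "t > 0"
  shows "(\<lambda>n. real n powr (s - \<alpha>) * weight (real n * t)) \<longlonglongrightarrow> \<beta> * t powr (\<alpha> - s)"
proof -
  have "filterlim (\<lambda>n. real n * t) at_top sequentially"
    using t by (intro filterlim_at_top_mult_tendsto_pos[OF tendsto_const] filterlim_real_sequentially)
  then have "(\<lambda>n. t powr (\<alpha> - s) * ((real n * t) powr s * survival (real n * t))) \<longlonglongrightarrow> t powr (\<alpha> - s) * \<beta>"
    by (intro tendsto_mult_left filterlim_compose[OF tendsto_powr_survival])
  moreover have "eventually (\<lambda>n. t powr (\<alpha> - s) * ((real n * t) powr s * survival (real n * t)) =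
      real n powr (s - \<alpha>) * weight (real n * t)) sequentially"
    unfolding eventually_sequentially using t by (intro exI[of _ 1]) (simp add: powr_mult_weight_scaled)
  ultimately have "(\<lambda>n. real n powr (s - \<alpha>) * weight (real n * t)) \<longlonglongrightarrow> t powr (\<alpha> - s) * \<beta>"
    by (rule Lim_transform_eventually)
  then show ?thesis
    by (simp only: mult.commute)
qed

lemma scaled_weight_le:
  assumes C: "\<And>t. t \<ge> 0 \<Longrightarrow> t powr s * survival t \<le> C" and t: "t \<ge> 0"
  shows "real n powr (s - \<alpha>) * weight (real n * t) \<le> C * t powr (\<alpha> - s)"
proof (cases "n > 0 \<and> t > 0")
  case True
  then have "real n powr (s - \<alpha>) * weight (real n * t) = t powr (\<alpha> - s) * ((real n * t) powr s * survival (real n * t))"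
    by (simp add: powr_mult_weight_scaled)
  also have "\<dots> \<le> t powr (\<alpha> - s) * C"
    using C[of "real n * t"] t by (intro mult_left_mono) auto
  finally show ?thesis by (simp add: mult.commute)
next
  case False
  have "0 \<le> C" using C[of 0] s_pos by simp
  then show ?thesis using False t by (auto simp: weight_def)
qed

lemma box_weight_rescaled:
  assumes n: "n \<ge> 1"
  shows "real n powr (s - \<alpha> - real CARD('d)) *
      enn2real (\<integral>\<^sup>+x. indicator (torus_box n :: (real^'d) set) x * ennreal (weight (norm x)) \<partial>lborel) =
    (\<integral>y. indicator (torus_box 1 :: (real^'d) set) y * (real n powr (s - \<alpha>) * weight (real n * norm y)) \<partial>lborel)"
proof -
  define J where "J = (\<integral>\<^sup>+y. indicator (torus_box 1 :: (real^'d) set) y * ennreal (weight (real n * norm y)) \<partial>lborel)"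
  have "(\<integral>y. indicator (torus_box 1 :: (real^'d) set) y * (real n powr (s - \<alpha>) * weight (real n * norm y)) \<partial>lborel) =
      enn2real (\<integral>\<^sup>+y. ennreal (real n powr (s - \<alpha>)) *
        (indicator (torus_box 1 :: (real^'d) set) y * ennreal (weight (real n * norm y))) \<partial>lborel)"
    by (subst integral_eq_nn_integral)
      (auto simp: weight_nonneg ennreal_mult' indicator_def intro!: arg_cong[where f=enn2real] nn_integral_cong)
  also have "\<dots> = real n powr (s - \<alpha>) * enn2real J"
    unfolding J_def by (subst nn_integral_cmult) (auto simp: enn2real_mult)
  finally have integral: "(\<integral>y. indicator (torus_box 1 :: (real^'d) set) y * (real n powr (s - \<alpha>) * weight (real n * norm y)) \<partial>lborel) =
      real n powr (s - \<alpha>) * enn2real J" .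
  have "real n powr (s - \<alpha>) = real n powr (s - \<alpha> - real CARD('d)) * real n ^ CARD('d)"
    using n by (simp add: powr_realpow[symmetric] powr_add[symmetric])
  then show ?thesis
    unfolding integral
    using nn_integral_torus_box_rescale[OF _ n, of "\<lambda>t. ennreal (weight t)", where 'd='d]
    by (simp add: J_def enn2real_mult mult.assoc)
qed

lemma tendsto_box_weight_subcritical:
  assumes sub: "s < \<alpha> + real CARD('d)"
  shows "(\<lambda>n. real n powr (s - \<alpha> - real CARD('d)) *
      enn2real (\<integral>\<^sup>+x. indicator (torus_box n :: (real^'d) set) x * ennreal (weight (norm x)) \<partial>lborel))
    \<longlonglongrightarrow> \<beta> * (\<integral>\<eta>. norm \<eta> powr (\<alpha> - s) \<partial>restrict_space lborel (cbox (\<chi> i. - 1 / 2) (\<chi> i. 1 / 2) :: (real^'d) set))"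
proof -
  obtain C where C: "C > 0" "\<And>t. t \<ge> 0 \<Longrightarrow> t powr s * survival t \<le> C"
    using powr_survival_bounded by blast
  define B1 where "B1 = (torus_box 1 :: (real^'d) set)"
  define F where "F n y = indicator B1 y * (real n powr (s - \<alpha>) * weight (real n * norm y))"
    for n and y :: "real^'d"
  have [measurable]: "B1 \<in> sets borel" by (simp add: B1_def)
  have F_lim: "(\<lambda>n. F n y) \<longlonglongrightarrow> indicator B1 y * (\<beta> * norm y powr (\<alpha> - s))" for y
  proof (cases "y = 0")
    case False
    then show ?thesis
      unfolding F_def by (intro tendsto_mult_left tendsto_scaled_weight) simp
  qed (simp add: F_def weight_def)
  have F_bound: "norm (F n y) \<le> C * (indicator B1 y * norm y powr (\<alpha> - s))" for n y
    using scaled_weight_le[OF C(2), of "norm y" n]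
    by (auto simp: F_def indicator_def weight_nonneg)
  have "(\<lambda>n. \<integral>y. F n y \<partial>lborel) \<longlonglongrightarrow> (\<integral>y. indicator B1 y * (\<beta> * norm y powr (\<alpha> - s)) \<partial>lborel)"
  proof (rule integral_dominated_convergence)
    show "integrable lborel (\<lambda>y. C * (indicator B1 y * norm y powr (\<alpha> - s)))"
      unfolding B1_def using sub by (intro integrable_mult_right integrable_torus_box_1_norm_powr) simp
  qed (use F_lim F_bound in \<open>auto simp: F_def\<close>)
  also have "(\<integral>y. indicator B1 y * (\<beta> * norm y powr (\<alpha> - s)) \<partial>lborel) =
      \<beta> * (\<integral>\<eta>. norm \<eta> powr (\<alpha> - s) \<partial>restrict_space lborel (cbox (\<chi> i. - 1 / 2) (\<chi> i. 1 / 2) :: (real^'d) set))"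
    using integral_cbox_half_eq_torus_box_1[of "\<lambda>\<eta>::real^'d. norm \<eta> powr (\<alpha> - s)"]
    by (simp add: B1_def mult.left_commute)
  finally show ?thesis
    by (rule Lim_transform_eventually)
      (auto simp: box_weight_rescaled F_def B1_def eventually_sequentially intro!: exI[of _ 1])
qed

lemma tendsto_radial_weight_div_ln:
  assumes D: "D \<ge> 1" and crit: "s = \<alpha> + real D"
  shows "((\<lambda>R. (\<integral>t. radial_density D t * weight t * indicator {1..R} t \<partial>lborel) / ln R)
    \<longlongrightarrow> real D * unit_ball_vol (real D) * \<beta>) at_top"
proof -
  define c where "c = real D * unit_ball_vol (real D)"
  have c: "c \<ge> 0" by (simp add: c_def)
  obtain C where C: "C > 0" "\<And>t. t \<ge> 0 \<Longrightarrow> t powr s * survival t \<le> C"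
    using powr_survival_bounded by blast
  have eq: "radial_density D t * weight t = c * (t powr s * survival t) / t" if "t > 0" for t
    using radial_density_mult_weight[OF D, of t] that crit by (simp add: c_def powr_diff)
  have le: "radial_density D t * weight t \<le> c * C / t" if "t \<ge> 1" for t
    using that C(2)[of t] c by (simp add: eq divide_right_mono mult_left_mono)
  have "((\<lambda>t. c * (t powr s * survival t)) \<longlongrightarrow> c * \<beta>) at_top"
    by (intro tendsto_mult_left tendsto_powr_survival)
  then have lim: "((\<lambda>t. t * (radial_density D t * weight t)) \<longlongrightarrow> c * \<beta>) at_top"
    by (rule Lim_transform_eventually) (auto simp: eq eventually_at_top_linorder intro!: exI[of _ 1])
  show ?thesis
    unfolding c_def[symmetric]
  proof (rule tendsto_integral_div_ln)
    show "(\<lambda>t. radial_density D t * weight t) \<in> borel_measurable borel" by measurable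
  qed (use le lim in \<open>auto simp: radial_density_nonneg weight_nonneg\<close>)
qed

lemma tendsto_cball_weight_div_ln:
  assumes crit: "s = \<alpha> + real DIM('a)"
  shows "((\<lambda>R. enn2real (\<integral>\<^sup>+x. indicator (cball (0::'a::euclidean_space) R) x * ennreal (weight (norm x)) \<partial>lborel) / ln R)
    \<longlongrightarrow> real DIM('a) * unit_ball_vol (real DIM('a)) * \<beta>) at_top"
proof -
  define D where "D = DIM('a)"
  have D: "D \<ge> 1" by (simp add: D_def Suc_leI)
  define k where "k t = radial_density D t * weight t" for t
  have k_nonneg: "k t \<ge> 0" for t by (simp add: k_def radial_density_nonneg weight_nonneg)
  define K0 where "K0 = (\<integral>\<^sup>+t. ennreal (k t * indicator {..<1} t) \<partial>lborel)"
  define P where "P R = (\<integral>\<^sup>+t. ennreal (k t * indicator {1..R} t) \<partial>lborel)" for R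
  have ball: "(\<integral>\<^sup>+x. indicator (cball (0::'a) R) x * ennreal (weight (norm x)) \<partial>lborel) = K0 + P R"
    if R: "R \<ge> 1" for R
  proof -
    have "(\<integral>\<^sup>+x. indicator (cball (0::'a) R) x * ennreal (weight (norm x)) \<partial>lborel) =
        (\<integral>\<^sup>+t. ennreal (k t * indicator {..<1} t) + ennreal (k t * indicator {1..R} t) \<partial>lborel)"
      unfolding nn_integral_cball_norm[OF borel_measurable_weight]
      using R k_nonneg by (intro nn_integral_cong) (auto simp: k_def D_def indicator_def)
    also have "\<dots> = K0 + P R"
      unfolding K0_def P_def by (rule nn_integral_add) (auto simp: k_def)
    finally show ?thesis .
  qed
  have finite: "K0 < \<infinity> \<and> P R < \<infinity>" if "R \<ge> 1" for R
    using ball[OF that] nn_integral_cball_weight_finite[of R, where 'a='a] that by simp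
  have P_eq: "enn2real (P R) = (\<integral>t. k t * indicator {1..R} t \<partial>lborel)" for R
    unfolding P_def k_def
    by (rule integral_eq_nn_integral[symmetric]) (auto simp: radial_density_nonneg weight_nonneg)
  have "((\<lambda>R. enn2real K0 / ln R) \<longlongrightarrow> 0) at_top"
    by real_asymp
  from tendsto_add[OF this tendsto_radial_weight_div_ln[OF D crit[folded D_def]]]
  have "((\<lambda>R. enn2real K0 / ln R + enn2real (P R) / ln R) \<longlongrightarrow> real D * unit_ball_vol (real D) * \<beta>) at_top"
    by (simp add: P_eq k_def)
  then show ?thesis
    unfolding D_def
    by (rule Lim_transform_eventually)
      (use ball finite in \<open>auto simp: enn2real_plus add_divide_distrib eventually_at_top_linorder intro!: exI[of _ 1]\<close>)
qed

lemma tendsto_box_weight_critical: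
  assumes crit: "s = \<alpha> + real CARD('d)"
  shows "(\<lambda>n. enn2real (\<integral>\<^sup>+x. indicator (torus_box n :: (real^'d) set) x * ennreal (weight (norm x)) \<partial>lborel) / ln (real n))
    \<longlonglongrightarrow> real CARD('d) * unit_ball_vol (real CARD('d)) * \<beta>"
proof (rule tendsto_div_ln_sandwich)
  define ball_mass where "ball_mass R = (\<integral>\<^sup>+x. indicator (cball (0::real^'d) R) x * ennreal (weight (norm x)) \<partial>lborel)"
    for R
  show "((\<lambda>R. enn2real (ball_mass R) / ln R) \<longlongrightarrow> real CARD('d) * unit_ball_vol (real CARD('d)) * \<beta>) at_top"
    unfolding ball_mass_def using tendsto_cball_weight_div_ln[where 'a="real^'d"] crit by simp
  show "eventually (\<lambda>n. enn2real (ball_mass (1 / 4 * real n)) \<le>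
      enn2real (\<integral>\<^sup>+x. indicator (torus_box n :: (real^'d) set) x * ennreal (weight (norm x)) \<partial>lborel) \<and>
      enn2real (\<integral>\<^sup>+x. indicator (torus_box n :: (real^'d) set) x * ennreal (weight (norm x)) \<partial>lborel) \<le>
      enn2real (ball_mass (real CARD('d) * real n))) sequentially"
    unfolding eventually_sequentially
  proof (intro exI[of _ 1] allI impI)
    fix n :: nat assume n: "n \<ge> 1"
    have "ball_mass (1 / 4 * real n) \<le>
        (\<integral>\<^sup>+x. indicator (torus_box n :: (real^'d) set) x * ennreal (weight (norm x)) \<partial>lborel)"
      unfolding ball_mass_def using cball_subset_torus_box[OF n, where 'd='d]
      by (intro nn_integral_mono) (auto simp: indicator_def)
    moreover have "(\<integral>\<^sup>+x. indicator (torus_box n :: (real^'d) set) x * ennreal (weight (norm x)) \<partial>lborel) \<le>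
        ball_mass (real CARD('d) * real n)"
      unfolding ball_mass_def using torus_box_subset_cball[of n, where 'd='d]
      by (intro nn_integral_mono) (auto simp: indicator_def)
    moreover have "ball_mass (real CARD('d) * real n) < \<infinity>"
      unfolding ball_mass_def by (rule nn_integral_cball_weight_finite) simp
    ultimately show "enn2real (ball_mass (1 / 4 * real n)) \<le>
        enn2real (\<integral>\<^sup>+x. indicator (torus_box n :: (real^'d) set) x * ennreal (weight (norm x)) \<partial>lborel) \<and>
        enn2real (\<integral>\<^sup>+x. indicator (torus_box n :: (real^'d) set) x * ennreal (weight (norm x)) \<partial>lborel) \<le>
        enn2real (ball_mass (real CARD('d) * real n))"
      by (auto intro!: enn2real_mono)
  qed
qed simp_all

end


theorem theorem2p3:
  fixes Q :: "real measure" and \<alpha> \<beta> s :: real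
    and M :: "nat \<Rightarrow> 'w measure" and X :: "nat \<Rightarrow> 'w \<Rightarrow> ((real^'d) \<times> real) set"
  assumes d2: "CARD('d) \<ge> 2"
    and Qprob: "prob_space Q" and Qsets: "sets Q = sets borel"
    and Qnonneg: "emeasure Q {..<0} = 0"
    and Qac: "absolutely_continuous lborel Q"
    and \<beta>pos: "\<beta> > 0" and spos: "s > 0"
    and tail: "((\<lambda>h. h powr s * measure Q {h<..}) \<longlongrightarrow> \<beta>) at_top"
    and \<alpha>pos: "\<alpha> > 0"
    and PPP: "\<And>n. n \<ge> 1 \<Longrightarrow> poisson_process (M n) (X n) (torus_leb n \<Otimes>\<^sub>M Q)"
  shows
   "(s > \<alpha> + CARD('d) \<longrightarrow>
      (\<lambda>n. \<integral>\<omega>. D_in \<alpha> n (X n \<omega>) \<partial>M n) \<longlonglongrightarrow>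
        CARD('d) * measure lborel (ball (0::real^'d) 1) / (\<alpha> + CARD('d))
          * (\<integral>r. r powr (\<alpha> + CARD('d)) \<partial>Q)) \<and>
    (s = \<alpha> + CARD('d) \<longrightarrow>
      (\<lambda>n. (\<integral>\<omega>. D_in \<alpha> n (X n \<omega>) \<partial>M n) / ln (real n)) \<longlonglongrightarrow>
        CARD('d) * measure lborel (ball (0::real^'d) 1) * \<beta>) \<and>
    (s < \<alpha> + CARD('d) \<longrightarrow>
      (\<lambda>n. real n powr (s - \<alpha> - CARD('d)) * (\<integral>\<omega>. D_in \<alpha> n (X n \<omega>) \<partial>M n)) \<longlonglongrightarrow>
        \<beta> * (\<integral>\<eta>. norm \<eta> powr (\<alpha> - s)
                 \<partial>(restrict_space lborel (cbox (\<chi> i. - 1 / 2) (\<chi> i. 1 / 2) :: (real^'d) set))))"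
proof -
  interpret power_tail_marks Q \<alpha> \<beta> s
    by (rule power_tail_marks.intro) fact+
  define box where "box n = enn2real (\<integral>\<^sup>+x. indicator (torus_box n :: (real^'d) set) x * ennreal (weight (norm x)) \<partial>lborel)"
    for n
  have "eventually (\<lambda>n. box n = (\<integral>\<omega>. D_in \<alpha> n (X n \<omega>) \<partial>M n)) sequentially"
    unfolding eventually_sequentially box_def
    using expectation_D_in[OF Qprob Qsets PPP] by (intro exI[of _ 1]) (simp add: weight_def survival_def)
  then have transfer: "(\<lambda>n. f n (box n)) \<longlonglongrightarrow> L \<Longrightarrow> (\<lambda>n. f n (\<integral>\<omega>. D_in \<alpha> n (X n \<omega>) \<partial>M n)) \<longlonglongrightarrow> L"
    for f L
    by (auto elim!: Lim_transform_eventually eventually_mono)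
  have volume: "measure lborel (ball (0::real^'d) 1) = unit_ball_vol (real CARD('d))"
    using content_ball[of 1 "0::real^'d"] by simp
  show ?thesis
    unfolding volume
    using transfer[of "\<lambda>_ x. x", OF tendsto_box_weight_supercritical[where 'd='d, folded box_def]]
      transfer[of "\<lambda>n x. x / ln (real n)", OF tendsto_box_weight_critical[where 'd='d, folded box_def]]
      transfer[of "\<lambda>n x. real n powr (s - \<alpha> - CARD('d)) * x", OF tendsto_box_weight_subcritical[where 'd='d, folded box_def]]
    by simp
qed

end
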